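(* Let $C$ be a supersingular curve of genus $g$ over $\mathbb{F}_q$, and write its normalized Weil numbers as $\zeta_{k_1}^{t_1},\ldots,\zeta_{k_{2g}}^{t_{2g}}$, where $\zeta_k=e^{2\pi i/k}$, $k_j\geq 1$, and $\gcd(k_j,t_j)=1$ for each $j$. Let $r$ be a positive integer. Then $C$ is maximal over $\mathbb{F}_{q^r}$ if and only if (i) there exist an integer $s\geq 1$ and odd integers $b_1,\ldots,b_{2g}$ such that $k_j=2^s b_j$ for all $1\le j\le 2g$ (with the same $s$ for all $j$), and (ii) $r$ is an odd multiple of $2^{s-1}\operatorname{lcm}(b_1,\ldots,b_{2g})$.
   Context: For a smooth projective curve $C$ of genus $g$ over $\mathbb{F}_q$, the zeta function is $Z(C/\mathbb{F}_q,T)=\exp\big(\sum_{s\ge1} \#C(\mathbb{F}_{q^s})T^s/s\big)=\frac{L(T)}{(1-T)(1-qT)}$ with $L(T)=\prod_{i=1}^{2g}(1-\alpha_iT)\in\mathbb{Z}[T]$, $|\alpha_i|=\sqrt q$. The normalized Weil numbers of $C/\mathbb{F}_q$ are $\alpha_i/\sqrt q$; those of $C/\mathbb{F}_{q^r}$ are their $r$-th powers. $C$ is supersingular if all normalized Weil numbers are roots of unity. $C$ is maximal over $\mathbb{F}_{Q}$ if $\#C(\mathbb{F}_Q)=1+Q+2g\sqrt{Q}$, which holds if and only if all normalized Weil numbers of $C/\mathbb{F}_Q$ equal $-1$. *)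

theory Defs
  imports "HOL-Analysis.Analysis" "HOL-Computational_Algebra.Computational_Algebra"
begin

text \<open>A curve C of genus g over F_q is represented through its Weil numbers
  alpha 0, ..., alpha (2g-1): L(T) = prod (1 - alpha_j T).  Expanding the zeta function
  Z = L(T)/((1-T)(1-qT)) = exp(sum N_s T^s / s) gives N_s = 1 + q^s - sum_j alpha_j^s.\<close>

definition L_poly :: "(nat \<Rightarrow> complex) \<Rightarrow> nat \<Rightarrow> complex poly" where
  "L_poly \<alpha> g = (\<Prod>j<2*g. [:1, - \<alpha> j:])"

definition point_count :: "nat \<Rightarrow> (nat \<Rightarrow> complex) \<Rightarrow> nat \<Rightarrow> nat \<Rightarrow> complex" where
  "point_count q \<alpha> g s = 1 + of_nat q ^ s - (\<Sum>j<2*g. \<alpha> j ^ s)"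

definition maximal_over :: "nat \<Rightarrow> (nat \<Rightarrow> complex) \<Rightarrow> nat \<Rightarrow> nat \<Rightarrow> bool" where
  "maximal_over q \<alpha> g r \<longleftrightarrow>
     point_count q \<alpha> g r = complex_of_real (1 + real q ^ r + 2 * real g * sqrt (real q ^ r))"

definition supersingular :: "nat \<Rightarrow> (nat \<Rightarrow> complex) \<Rightarrow> nat \<Rightarrow> bool" where
  "supersingular q \<alpha> g \<longleftrightarrow>
     (\<forall>j<2*g. \<exists>n>0. (\<alpha> j / complex_of_real (sqrt (real q))) ^ n = 1)"

end

theory Submission
  imports Defs
begin

text \<open>A sum of $2g$ complex numbers of modulus one equals $-2g$ only if every summand is $-1$,
  so $C$ is maximal over $\mathbb{F}_{q^r}$ exactly when $\zeta_{k_j}^{t_j r} = -1$ for all $j$.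
  Since $\gcd(k_j, t_j) = 1$, this says that $2r$ is an odd multiple of $k_j$.  Writing
  $2r = 2^s u$ with $u$ odd, that holds for all $j$ iff every $k_j$ is $2^s$ times an odd
  divisor $b_j$ of $u$, i.e. iff all $k_j$ have the same $2$-adic valuation $s \geq 1$ and
  $u = r / 2^{s-1}$ is an odd multiple of $\operatorname{lcm}(b_j)$.\<close>

lemma cis_eq_minus_one_iff: "cis x = -1 \<longleftrightarrow> (\<exists>n::int. x = (2 * n + 1) * pi)"
proof -
  have "cis x = -1 \<longleftrightarrow> cos x = -1"
  proof
    assume "cos x = -1"
    moreover from this have "sin x = 0"
      using sin_cos_squared_add[of x] by simp
    ultimately show "cis x = -1" by (simp add: complex_eq_iff)
  qed (simp add: complex_eq_iff)
  then show ?thesis by (simp add: cos_eq_minus1)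
qed

lemma sum_unit_complex_eq_minus_card_iff:
  fixes w :: "'a \<Rightarrow> complex"
  assumes "finite A" and "\<forall>j\<in>A. norm (w j) = 1"
  shows "(\<Sum>j\<in>A. w j) = - of_nat (card A) \<longleftrightarrow> (\<forall>j\<in>A. w j = -1)"
proof
  assume sum_eq: "(\<Sum>j\<in>A. w j) = - of_nat (card A)"
  have "(\<Sum>j\<in>A. Re (w j) + 1) = 0"
    using arg_cong[OF sum_eq, of Re] by (simp add: Re_sum sum.distrib)
  moreover have "Re (w j) + 1 \<ge> 0" if "j \<in> A" for j
  proof -
    have "\<bar>Re (w j)\<bar> \<le> 1"
      using abs_Re_le_cmod[of "w j"] assms(2) that by simp
    then show ?thesis by arith
  qed
  ultimately have Re_eq: "Re (w j) = -1" if "j \<in> A" for j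
    using sum_nonneg_eq_0_iff[OF assms(1), of "\<lambda>j. Re (w j) + 1"] that
    by (simp add: add_eq_0_iff2)
  show "\<forall>j\<in>A. w j = -1"
  proof
    fix j assume "j \<in> A"
    then have "(Im (w j))\<^sup>2 = 0"
      using cmod_power2[of "w j"] Re_eq assms(2) by simp
    with Re_eq \<open>j \<in> A\<close> show "w j = -1" by (simp add: complex_eq_iff)
  qed
qed simp

lemma two_power_times_odd_unique:
  fixes x y :: nat
  assumes "odd x" "odd y" "2 ^ a * x = 2 ^ b * y"
  shows "a = b \<and> x = y"
proof -
  have "a = multiplicity 2 (2 ^ a * x)"
    by (rule multiplicity_decomposeI[OF refl, symmetric]) (use assms(1) in simp_all)
  also have "\<dots> = multiplicity 2 (2 ^ b * y)" by (simp only: assms(3))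
  also have "\<dots> = b"
    by (rule multiplicity_decomposeI[OF refl]) (use assms(2) in simp_all)
  finally have "a = b" .
  moreover from assms(3) have "x = y" unfolding \<open>a = b\<close> by simp
  ultimately show ?thesis ..
qed

lemma two_power_times_odd_is_odd_multiple_iff:
  fixes k u :: nat
  assumes "odd u" and "k > 0"
  shows "(\<exists>m. odd m \<and> 2 ^ s * u = m * k) \<longleftrightarrow> (\<exists>b. odd b \<and> k = 2 ^ s * b \<and> b dvd u)"
proof
  assume "\<exists>m. odd m \<and> 2 ^ s * u = m * k"
  then obtain m where m: "odd m" "2 ^ s * u = m * k" by blast
  obtain c where c: "k = 2 ^ multiplicity 2 k * c" "odd c"
    by (rule multiplicity_decompose'[of k 2]) (use assms(2) in auto)
  have "2 ^ s * u = 2 ^ multiplicity 2 k * (m * c)"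
    using m(2) c(1) by (metis mult.left_commute)
  with assms(1) m(1) c(2) have "s = multiplicity 2 k" "u = m * c"
    using two_power_times_odd_unique by (metis even_mult_iff)+
  with c show "\<exists>b. odd b \<and> k = 2 ^ s * b \<and> b dvd u" by auto
next
  assume "\<exists>b. odd b \<and> k = 2 ^ s * b \<and> b dvd u"
  then obtain b c where "k = 2 ^ s * b" "u = b * c" by blast
  with assms(1) show "\<exists>m. odd m \<and> 2 ^ s * u = m * k"
    by (intro exI[of _ c]) simp
qed

lemma odd_Lcm:
  fixes b :: "'a \<Rightarrow> nat"
  assumes "finite A" and "\<forall>j\<in>A. odd (b j)"
  shows "odd (Lcm (b ` A))"
proof -
  have "Lcm (b ` A) dvd prod b A"
    using assms(1) by (auto intro!: Lcm_least dvd_prodI)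
  moreover have "odd (prod b A)"
    using assms by (simp add: even_prod_iff)
  ultimately show ?thesis by (meson dvd_trans)
qed

lemma odd_multiple_of_denominator_iff:
  fixes r k :: nat and t :: int
  assumes "k > 0" and "coprime (int k) t"
  shows "(\<exists>n::int. 2 * int r * t = (2 * n + 1) * int k) \<longleftrightarrow> (\<exists>m. odd m \<and> 2 * r = m * k)"
proof
  assume "\<exists>n::int. 2 * int r * t = (2 * n + 1) * int k"
  then obtain n :: int where n: "2 * int r * t = (2 * n + 1) * int k" ..
  then have "int k dvd int (2 * r) * t" by (simp add: mult.commute)
  then have "k dvd 2 * r"
    using coprime_dvd_mult_left_iff[OF assms(2)] by (simp only: int_dvd_int_iff)
  then obtain m where m: "2 * r = k * m" ..
  have "int k * (int m * t) = int k * (2 * n + 1)"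
    using n m by (metis mult.assoc mult.commute of_nat_mult of_nat_numeral)
  then have "int m * t = 2 * n + 1" using assms(1) by simp
  then have "odd (int m * t)" by simp
  then have "odd m" by simp
  with m show "\<exists>m. odd m \<and> 2 * r = m * k" by (auto simp: mult.commute)
next
  assume "\<exists>m. odd m \<and> 2 * r = m * k"
  then obtain m where m: "odd m" "2 * r = m * k" by blast
  then have "even k" by (metis even_mult_iff dvd_triv_left)
  have "odd t"
  proof
    assume "even t"
    moreover have "(2::int) dvd int k" using \<open>even k\<close> by simp
    ultimately have "is_unit (2::int)"
      using coprime_common_divisor[OF assms(2)] by metis
    then show False by simp
  qed
  with m obtain n where "int m * t = 2 * n + 1" by (metis even_mult_iff even_of_nat oddE)
  moreover have "2 * int r * t = int m * t * int k"
    using arg_cong[OF m(2), of int] by (simp add: algebra_simps)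
  ultimately show "\<exists>n::int. 2 * int r * t = (2 * n + 1) * int k" by auto
qed

lemma cis_root_of_unity_power_eq_minus_one_iff:
  fixes r k :: nat and t :: int
  assumes "k > 0" and "coprime (int k) t"
  shows "cis (2 * pi * of_int t / real k) ^ r = -1 \<longleftrightarrow> (\<exists>m. odd m \<and> 2 * r = m * k)"
proof -
  have angle_eq_iff: "real r * (2 * pi * of_int t / real k) = (2 * of_int n + 1) * pi
      \<longleftrightarrow> 2 * int r * t = (2 * n + 1) * int k" for n :: int
  proof -
    have "real r * (2 * pi * of_int t / real k) = (2 * of_int n + 1) * pi
        \<longleftrightarrow> pi * of_int (2 * int r * t) = pi * of_int ((2 * n + 1) * int k)"
      using assms(1) by (simp add: field_simps)
    also have "\<dots> \<longleftrightarrow> real_of_int (2 * int r * t) = of_int ((2 * n + 1) * int k)"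
      by (rule mult_left_cancel) simp
    finally show ?thesis by (simp only: of_int_eq_iff)
  qed
  have "cis (2 * pi * of_int t / real k) ^ r = -1
      \<longleftrightarrow> (\<exists>n::int. 2 * int r * t = (2 * n + 1) * int k)"
    by (simp only: Complex.DeMoivre cis_eq_minus_one_iff angle_eq_iff)
  also have "\<dots> \<longleftrightarrow> (\<exists>m. odd m \<and> 2 * r = m * k)"
    by (rule odd_multiple_of_denominator_iff[OF assms])
  finally show ?thesis .
qed

lemma double_odd_multiple_of_all_iff:
  fixes r :: nat and k :: "'a \<Rightarrow> nat"
  assumes "r > 0" and "finite J" and "\<forall>j\<in>J. k j > 0"
  shows "(\<forall>j\<in>J. \<exists>m. odd m \<and> 2 * r = m * k j) \<longleftrightarrow>
    (\<exists>s\<ge>1. \<exists>b :: 'a \<Rightarrow> nat. (\<forall>j\<in>J. odd (b j) \<and> k j = 2 ^ s * b j) \<and>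
        (\<exists>m. odd m \<and> r = m * (2 ^ (s - 1) * Lcm (b ` J))))"
    (is "?lhs \<longleftrightarrow> ?rhs")
proof -
  define s where "s = multiplicity 2 (2 * r)"
  obtain u where u: "2 * r = 2 ^ s * u" "odd u"
    unfolding s_def by (rule multiplicity_decompose'[of "2 * r" 2]) (use assms(1) in auto)
  have "s \<ge> 1"
    using u by (cases s) auto
  then have r_eq: "r = 2 ^ (s - 1) * u"
    using u(1) by (cases s) auto
  have odd_multiple_iff_dvd_odd_part: "(\<exists>m. odd m \<and> 2 * r = m * k j) \<longleftrightarrow>
      (\<exists>b. odd b \<and> k j = 2 ^ s * b \<and> b dvd u)" if "j \<in> J" for j
    unfolding u(1)
    by (rule two_power_times_odd_is_odd_multiple_iff[OF u(2)]) (use assms(3) that in blast)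
  show ?thesis
  proof
    assume ?lhs
    then obtain b where b: "\<forall>j\<in>J. odd (b j) \<and> k j = 2 ^ s * b j \<and> b j dvd u"
      using odd_multiple_iff_dvd_odd_part by metis
    then have "Lcm (b ` J) dvd u" by (auto intro: Lcm_least)
    then obtain m where m: "u = Lcm (b ` J) * m" ..
    with u(2) have "odd m" by simp
    with b m r_eq \<open>s \<ge> 1\<close> show ?rhs
      by (intro exI[of _ s] conjI exI[of _ b] exI[of _ m]) auto
  next
    assume ?rhs
    then obtain s' b m where "s' \<ge> 1" and b: "\<forall>j\<in>J. odd (b j) \<and> k j = 2 ^ s' * b j"
      and "odd m" and r_eq': "r = m * (2 ^ (s' - 1) * Lcm (b ` J))"
      by blast
    have "odd (m * Lcm (b ` J))"
      using \<open>odd m\<close> odd_Lcm[OF assms(2)] b by simp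
    moreover have "2 ^ s * u = 2 ^ s' * (m * Lcm (b ` J))"
      using u(1) r_eq' \<open>s' \<ge> 1\<close> by (cases s') (simp_all add: mult_ac)
    ultimately have "s' = s" "u = m * Lcm (b ` J)"
      using two_power_times_odd_unique u(2) by metis+
    then have "\<forall>j\<in>J. odd (b j) \<and> k j = 2 ^ s * b j \<and> b j dvd u"
      using b by auto
    then show ?lhs
      using odd_multiple_iff_dvd_odd_part by blast
  qed
qed

lemma maximal_over_iff_normalized_powers:
  fixes q g r :: nat and \<alpha> :: "nat \<Rightarrow> complex"
  assumes "q > 0" and "\<forall>j<2*g. norm (\<alpha> j) = sqrt (real q)"
  shows "maximal_over q \<alpha> g r \<longleftrightarrow>
    (\<forall>j<2*g. (\<alpha> j / complex_of_real (sqrt (real q))) ^ r = -1)"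
proof -
  define c where "c = sqrt (real q)"
  define z where "z j = \<alpha> j / complex_of_real c" for j
  have "c > 0" using assms(1) by (simp add: c_def)
  then have \<alpha>_eq: "\<alpha> j = complex_of_real c * z j" for j
    by (simp add: z_def)
  have norm_z: "\<forall>j\<in>{..<2*g}. norm (z j ^ r) = 1"
    using assms(2) \<open>c > 0\<close> by (simp add: z_def c_def norm_divide norm_power)
  have "maximal_over q \<alpha> g r \<longleftrightarrow>
      complex_of_real (c ^ r) * (\<Sum>j<2*g. z j ^ r) = - (complex_of_real (c ^ r) * of_nat (2*g))"
    unfolding maximal_over_def point_count_def
    by (simp add: \<alpha>_eq power_mult_distrib sum_distrib_left c_def real_sqrt_power
        algebra_simps add_eq_0_iff)
  also have "\<dots> \<longleftrightarrow> (\<Sum>j<2*g. z j ^ r) = - of_nat (card {..<2*g})"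
    using \<open>c > 0\<close> unfolding card_lessThan
    by (metis mult_left_cancel mult_minus_right of_real_eq_0_iff power_not_zero less_irrefl)
  also have "\<dots> \<longleftrightarrow> (\<forall>j<2*g. z j ^ r = -1)"
    using sum_unit_complex_eq_minus_card_iff[OF finite_lessThan norm_z] by auto
  finally show ?thesis by (simp add: z_def c_def)
qed

theorem mainTheorem1:
  fixes q g r :: nat and \<alpha> :: "nat \<Rightarrow> complex" and k :: "nat \<Rightarrow> nat" and t :: "nat \<Rightarrow> int"
  assumes q_pp: "\<exists>p e. prime p \<and> e \<ge> 1 \<and> q = p ^ e"
    and weil_abs: "\<forall>j<2*g. norm (\<alpha> j) = sqrt (real q)"
    and L_int: "\<forall>i. coeff (L_poly \<alpha> g) i \<in> \<int>"
    and ss: "supersingular q \<alpha> g"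
    and k_pos: "\<forall>j<2*g. k j \<ge> 1"
    and kt_coprime: "\<forall>j<2*g. coprime (int (k j)) (t j)"
    and normalized: "\<forall>j<2*g. \<alpha> j / complex_of_real (sqrt (real q))
                        = cis (2 * pi * real_of_int (t j) / real (k j))"
    and r_pos: "r \<ge> 1"
  shows "maximal_over q \<alpha> g r \<longleftrightarrow>
     (\<exists>s\<ge>1. \<exists>b :: nat \<Rightarrow> nat.
        (\<forall>j<2*g. odd (b j) \<and> k j = 2 ^ s * b j) \<and>
        (\<exists>m::nat. odd m \<and> r = m * (2 ^ (s - 1) * Lcm (b ` {..<2*g}))))"
proof -
  have "q > 0"
    using q_pp prime_gt_0_nat by auto
  then have "maximal_over q \<alpha> g r \<longleftrightarrow>
      (\<forall>j<2*g. cis (2 * pi * real_of_int (t j) / real (k j)) ^ r = -1)"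
    using maximal_over_iff_normalized_powers weil_abs normalized by simp
  also have "\<dots> \<longleftrightarrow> (\<forall>j\<in>{..<2*g}. \<exists>m. odd m \<and> 2 * r = m * k j)"
  proof -
    have "cis (2 * pi * real_of_int (t j) / real (k j)) ^ r = -1 \<longleftrightarrow>
        (\<exists>m. odd m \<and> 2 * r = m * k j)" if "j < 2*g" for j
      by (intro cis_root_of_unity_power_eq_minus_one_iff) (use k_pos kt_coprime that in auto)
    then show ?thesis by auto
  qed
  finally show ?thesis
    using double_odd_multiple_of_all_iff[of r "{..<2*g}" k] r_pos k_pos
    by (simp add: Ball_def Suc_le_eq)
qed

end
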